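(* Let $k\ge 2$ and $n\ge 2k$ be integers. The Kneser graph $\mathrm{KG}(n,k)$ satisfies $\alpha_{\mathrm{od}}(\mathrm{KG}(n,k))=\alpha(\mathrm{KG}(n,k))$ if and only if $\binom{n-k-1}{k-1}$ is odd. Equivalently, $\alpha_{\mathrm{od}}(\mathrm{KG}(n,k))=\alpha(\mathrm{KG}(n,k))$ if and only if $\binom{n-1}{k-1}\not\equiv \sum_{t=1}^{k}\binom{k}{t}\binom{n-k-1}{k-1-t} \pmod 2$.
   Context: The Kneser graph $\mathrm{KG}(n,k)$ has as vertices the $k$-element subsets of an $n$-element set, two being adjacent iff they are disjoint. An odd independent set in a graph $G=(V,E)$ is an independent set $S$ such that every $v\in V\setminus S$ has either no neighbor or an odd number of neighbors in $S$. $\alpha_{\mathrm{od}}(G)$ is the maximum size of an odd independent set; $\alpha(G)$ is the independence number. *)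

theory Defs
  imports Main
begin

definition indep_set :: "'a set \<Rightarrow> ('a \<Rightarrow> 'a \<Rightarrow> bool) \<Rightarrow> 'a set \<Rightarrow> bool" where
  "indep_set V E S \<longleftrightarrow> S \<subseteq> V \<and> (\<forall>x\<in>S. \<forall>y\<in>S. \<not> E x y)"

definition odd_indep_set :: "'a set \<Rightarrow> ('a \<Rightarrow> 'a \<Rightarrow> bool) \<Rightarrow> 'a set \<Rightarrow> bool" where
  "odd_indep_set V E S \<longleftrightarrow> indep_set V E S \<and>
     (\<forall>v\<in>V - S. card {u\<in>S. E v u} = 0 \<or> odd (card {u\<in>S. E v u}))"

definition alpha :: "'a set \<Rightarrow> ('a \<Rightarrow> 'a \<Rightarrow> bool) \<Rightarrow> nat" where
  "alpha V E = Max (card ` {S. indep_set V E S})"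

definition alpha_od :: "'a set \<Rightarrow> ('a \<Rightarrow> 'a \<Rightarrow> bool) \<Rightarrow> nat" where
  "alpha_od V E = Max (card ` {S. odd_indep_set V E S})"

definition kneser_vertices :: "nat \<Rightarrow> nat \<Rightarrow> nat set set" where
  "kneser_vertices n k = {A. A \<subseteq> {..<n} \<and> card A = k}"

definition kneser_adj :: "nat set \<Rightarrow> nat set \<Rightarrow> bool" where
  "kneser_adj A B \<longleftrightarrow> A \<inter> B = {}"

end

theory Submission
  imports Defs "HOL-Combinatorics.Permutations"
begin

(*
  By the Erdos-Ko-Rado theorem, alpha(KG(n,k)) = C(n-1,k-1), attained by the stars
  {A. x \<in> A}, and for n > 2k the stars are the only maximum independent sets.  A vertex
  outside a star is disjoint from exactly C(n-k-1,k-1) > 0 of its members, so a star is an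
  odd independent set iff C(n-k-1,k-1) is odd (for n = 2k this number is 1).

  Both the bound and the uniqueness come from Katona's cycle method: in a cyclic arrangement
  of {0..n-1}, at most k of the n arcs of length k belong to an intersecting family, and
  double counting over all arrangements gives the bound.  For an extremal family every
  arrangement carries exactly k arcs, which come in complementary pairs; choosing suitable
  arrangements shows that once the link of a point x contains two disjoint sets, it is
  closed under passing to disjoint sets, hence (the Kneser graph being connected) contains
  every (k-1)-set avoiding x.

  The second criterion is Vandermonde's identity
  C(n-1,k-1) = \<Sum>t. C(k,t) C(n-k-1,k-1-t) read modulo 2.
*)

definition intersecting :: "'a set set \<Rightarrow> bool" where
  "intersecting F \<longleftrightarrow> (\<forall>A\<in>F. \<forall>B\<in>F. A \<inter> B \<noteq> {})"

lemma card_subsets_containing: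
  assumes U: "finite U" and x: "x \<in> U" and k: "1 \<le> k"
  shows "card {A. A \<subseteq> U \<and> card A = k \<and> x \<in> A} = (card U - 1) choose (k - 1)"
proof -
  have "{A. A \<subseteq> U \<and> card A = k \<and> x \<in> A} = insert x ` {B. B \<subseteq> U - {x} \<and> card B = k - 1}"
  proof (intro equalityI subsetI)
    fix A assume A: "A \<in> {A. A \<subseteq> U \<and> card A = k \<and> x \<in> A}"
    then have "A = insert x (A - {x})" "A - {x} \<subseteq> U - {x}" "card (A - {x}) = k - 1"
      using finite_subset[OF _ U] by auto
    then show "A \<in> insert x ` {B. B \<subseteq> U - {x} \<and> card B = k - 1}" by blast
  next
    fix A assume "A \<in> insert x ` {B. B \<subseteq> U - {x} \<and> card B = k - 1}"
    then obtain B where B: "B \<subseteq> U - {x}" "card B = k - 1" "A = insert x B" by auto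
    moreover have "finite B" "x \<notin> B" using B(1) finite_subset[OF _ U] by auto
    ultimately have "card A = k" using k by simp
    then show "A \<in> {A. A \<subseteq> U \<and> card A = k \<and> x \<in> A}" using B x by auto
  qed
  moreover have "inj_on (insert x) {B. B \<subseteq> U - {x} \<and> card B = k - 1}"
    by (rule inj_onI) (metis Diff_insert_absorb mem_Collect_eq subset_Diff_insert)
  ultimately have "card {A. A \<subseteq> U \<and> card A = k \<and> x \<in> A}
      = card {B. B \<subseteq> U - {x} \<and> card B = k - 1}"
    by (simp add: card_image)
  also have "\<dots> = (card U - 1) choose (k - 1)" using n_subsets[of "U - {x}"] U x by simp
  finally show ?thesis .
qed

lemma obtain_bij_betw_point:
  assumes "finite A" "card A = card B" "a \<in> A" "b \<in> B"
  obtains f where "bij_betw f A B" "f a = b"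
proof -
  have "finite B" using assms card_gt_0_iff by (metis card.infinite empty_iff)
  then have "card (A - {a}) = card (B - {b})" using assms by simp
  then obtain g where "bij_betw g (A - {a}) (B - {b})"
    using finite_same_card_bij \<open>finite A\<close> \<open>finite B\<close> by (meson finite_Diff)
  then have "bij_betw (\<lambda>i. if i \<in> {a} then b else g i) ({a} \<union> (A - {a})) ({b} \<union> (B - {b}))"
    by (intro bij_betw_disjoint_Un) auto
  moreover have "{a} \<union> (A - {a}) = A" "{b} \<union> (B - {b}) = B" using assms by auto
  ultimately show ?thesis using that by fastforce
qed

lemma obtain_permutes_extending:
  assumes U: "finite U" and PU: "P \<subseteq> U" and TU: "T \<subseteq> U" and f: "bij_betw f P T"
  obtains q where "q permutes U" "\<And>i. i \<in> P \<Longrightarrow> q i = f i"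
proof -
  have "card (U - P) = card (U - T)"
    using bij_betw_same_card[OF f] PU TU U by (simp add: card_Diff_subset finite_subset)
  then obtain g where g: "bij_betw g (U - P) (U - T)"
    using finite_same_card_bij U by (meson finite_Diff)
  define q where "q i = (if i \<in> P then f i else if i \<in> U then g i else i)" for i
  have "bij_betw q P T"
    using f by (rule bij_betw_cong[THEN iffD1, rotated]) (simp add: q_def)
  moreover have "bij_betw q (U - P) (U - T)"
    using g by (rule bij_betw_cong[THEN iffD1, rotated]) (simp add: q_def)
  ultimately have "bij_betw q (P \<union> (U - P)) (T \<union> (U - T))"
    by (rule bij_betw_combine) auto
  moreover have "P \<union> (U - P) = U" "T \<union> (U - T) = U" using PU TU by auto
  ultimately have "q permutes U"
    by (intro bij_imp_permutes) (use PU in \<open>auto simp: q_def\<close>)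
  then show ?thesis using that by (simp add: q_def)
qed

lemma obtain_permutes_image_eq:
  assumes "finite U" "A \<subseteq> U" "B \<subseteq> U" "card A = card B"
  obtains t where "t permutes U" "t ` A = B"
proof -
  obtain f where f: "bij_betw f A B" using finite_same_card_bij assms finite_subset by metis
  obtain t where t: "t permutes U" "\<And>i. i \<in> A \<Longrightarrow> t i = f i"
    using obtain_permutes_extending[OF assms(1-3) f] by metis
  have "t ` A = f ` A" using t(2) by auto
  also have "\<dots> = B" using f by (simp add: bij_betw_def)
  finally show ?thesis using that t(1) by blast
qed

lemma sum_permutations_compose_left:
  assumes t: "t permutes S"
  shows "sum f {p. p permutes S} = sum (\<lambda>p. f (t \<circ> p)) {p. p permutes S}"
proof -
  have "inj_on ((\<circ>) t) {p. p permutes S}"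
    using permutes_inj[OF t] by (auto simp: inj_on_def fun_eq_iff dest: injD)
  moreover have "{p. p permutes S} = (\<circ>) t ` {p. p permutes S}"
    using image_compose_permutations_left[OF t] by auto
  ultimately show ?thesis by (rule sum.reindex_cong) simp
qed

(* Connectivity of the Kneser graph on the j-subsets of U for card U > 2 j,
   as an induction principle. *)
lemma kneser_connected_induct:
  assumes U: "finite U" "2 * j < card U"
    and step: "\<And>Y X. P Y \<Longrightarrow> Y \<subseteq> U \<Longrightarrow> card Y = j \<Longrightarrow>
      X \<subseteq> U \<Longrightarrow> card X = j \<Longrightarrow> X \<inter> Y = {} \<Longrightarrow> P X"
    and Y: "P Y" "Y \<subseteq> U" "card Y = j"
    and T: "T \<subseteq> U" "card T = j"
  shows "P T"
  using Y
proof (induction "card (Y - T)" arbitrary: Y)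
  case 0
  have "finite Y" using 0 U(1) finite_subset by blast
  then have "Y \<subseteq> T" using 0 by auto
  then have "Y = T" using card_subset_eq[OF finite_subset[OF T(1) U(1)]] 0 T by simp
  then show ?case using 0 by simp
next
  case (Suc m)
  have finY: "finite Y" using Suc.prems U(1) finite_subset by blast
  obtain a where a: "a \<in> Y" "a \<notin> T"
    using Suc.hyps(2) by (metis Diff_eq_empty_iff card.empty nat.distinct(1) subsetI)
  obtain b where b: "b \<in> T" "b \<notin> Y"
  proof -
    have "\<not> T \<subseteq> Y"
      using card_subset_eq[OF finY] Suc.prems(3) T(2) a by metis
    then show ?thesis using that by blast
  qed
  have "card (insert b Y) = j + 1" using b finY Suc.prems(3) by simp
  moreover have "insert b Y \<subseteq> U" using b T(1) Suc.prems(2) by blast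
  ultimately have "j \<le> card (U - insert b Y)"
    using U card_Diff_subset[of "insert b Y" U] finY by simp
  then obtain C where C: "C \<subseteq> U - insert b Y" "card C = j"
    by (rule obtain_subset_with_card_n)
  have "P C" using step[OF Suc.prems] C by blast
  define Y' where "Y' = insert b (Y - {a})"
  have "card Y' = j" using a b finY Suc.prems(3) card_gt_0_iff[of Y] by (auto simp: Y'_def)
  moreover have "Y' \<subseteq> U" using Suc.prems(2) b T(1) by (auto simp: Y'_def)
  moreover have "Y' \<inter> C = {}" using C by (auto simp: Y'_def)
  ultimately have "P Y'" using step[OF \<open>P C\<close>] C by blast
  moreover have "Y' - T = (Y - T) - {a}" using b by (auto simp: Y'_def)
  then have "m = card (Y' - T)" using Suc.hyps(2) a finY by simp
  ultimately show ?case using Suc.hyps(1) \<open>card Y' = j\<close> \<open>Y' \<subseteq> U\<close> by blast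
qed

section \<open>Cyclic intervals\<close>

definition cyc_add :: "nat \<Rightarrow> nat \<Rightarrow> nat \<Rightarrow> nat" where
  "cyc_add n a i = (if a + i < n then a + i else a + i - n)"

(* (t - s) mod n: the distance from s forward to t *)
definition cyc_dist :: "nat \<Rightarrow> nat \<Rightarrow> nat \<Rightarrow> nat" where
  "cyc_dist n s t = (if s \<le> t then t - s else t + n - s)"

definition cyc_interval :: "nat \<Rightarrow> nat \<Rightarrow> nat \<Rightarrow> nat set" where
  "cyc_interval n k s = cyc_add n s ` {..<k}"

lemma cyc_interval_subset: "s < n \<Longrightarrow> k \<le> n \<Longrightarrow> cyc_interval n k s \<subseteq> {..<n}"
  by (auto simp: cyc_interval_def cyc_add_def)

lemma card_cyc_interval:
  assumes "s < n" "k \<le> n"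
  shows "card (cyc_interval n k s) = k"
proof -
  have "inj_on (cyc_add n s) {..<k}"
    using assms by (auto simp: inj_on_def cyc_add_def split: if_splits)
  then show ?thesis by (simp add: cyc_interval_def card_image)
qed

lemma cyc_interval_disjoint:
  assumes "s < n" "t < n" "k \<le> cyc_dist n s t" "cyc_dist n s t \<le> n - k"
  shows "cyc_interval n k s \<inter> cyc_interval n k t = {}"
  using assms by (auto simp: cyc_interval_def cyc_add_def cyc_dist_def split: if_splits)

lemma cyc_interval_no_wrap:
  assumes "s + k \<le> n"
  shows "cyc_interval n k s = {s..<s+k}"
proof -
  have "cyc_interval n k s = (+) s ` {..<k}"
    unfolding cyc_interval_def using assms by (intro image_cong) (auto simp: cyc_add_def)
  also have "\<dots> = {s..<s+k}" by (simp add: lessThan_atLeast0 add.commute)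
  finally show ?thesis .
qed

lemma cyc_interval_wrap:
  assumes "s < n" "k \<le> n" "n < s + k"
  shows "cyc_interval n k s = {s..<n} \<union> {..<s+k-n}"
proof
  show "cyc_interval n k s \<subseteq> {s..<n} \<union> {..<s+k-n}"
    using assms by (auto simp: cyc_interval_def cyc_add_def)
  show "{s..<n} \<union> {..<s+k-n} \<subseteq> cyc_interval n k s"
  proof
    fix j assume j: "j \<in> {s..<n} \<union> {..<s+k-n}"
    then have "j = cyc_add n s (cyc_dist n s j)" "cyc_dist n s j < k"
      using assms by (auto simp: cyc_add_def cyc_dist_def)
    then show "j \<in> cyc_interval n k s" unfolding cyc_interval_def by blast
  qed
qed

lemma cyc_dist_less: "s < n \<Longrightarrow> t < n \<Longrightarrow> cyc_dist n s t < n"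
  by (auto simp: cyc_dist_def)

lemma cyc_add_cyc_dist: "s < n \<Longrightarrow> t < n \<Longrightarrow> cyc_add n s (cyc_dist n s t) = t"
  by (auto simp: cyc_add_def cyc_dist_def)

lemma cyc_dist_sub:
  assumes "a < n" "s < n" "t < n" "cyc_dist n a s \<le> cyc_dist n a t"
  shows "cyc_dist n s t = cyc_dist n a t - cyc_dist n a s"
  using assms by (auto simp: cyc_dist_def split: if_splits)

lemma katona_circle_embedding:
  assumes S: "S \<subseteq> {..<n}" and nk: "2 * k \<le> n" and a: "a \<in> S"
    and meet: "\<And>s t. s \<in> S \<Longrightarrow> t \<in> S \<Longrightarrow> cyc_interval n k s \<inter> cyc_interval n k t \<noteq> {}"
  obtains h where "inj_on h S" "h ` S \<subseteq> {..<k}"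
    "\<And>s. s \<in> S \<Longrightarrow> s = cyc_add n a (h s) \<or> s = cyc_add n a (h s + n - k)"
proof
  have close: "cyc_dist n s t < k \<or> n - k < cyc_dist n s t" if "s \<in> S" "t \<in> S" for s t
    using cyc_interval_disjoint meet that S by (meson lessThan_iff not_le subsetD)
  (* Since the arcs at a and s meet, the forward distance from a to s avoids [k, n - k];
     h folds it into {..<k}. *)
  define h where "h s = (if cyc_dist n a s < k then cyc_dist n a s else cyc_dist n a s - (n - k))"
    for s
  have an: "a < n" using a S by auto
  show "inj_on h S"
  proof (rule inj_onI)
    fix s t assume s: "s \<in> S" and t: "t \<in> S" and e: "h s = h t"
    have no_jump: "h u \<noteq> h v"
      if "u \<in> S" "v \<in> S" "cyc_dist n a u < k" "n - k < cyc_dist n a v" for u v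
    proof
      assume "h u = h v"
      then have "cyc_dist n a v = cyc_dist n a u + (n - k)"
        using that nk unfolding h_def by auto
      then have "cyc_dist n u v = n - k"
        using cyc_dist_sub[OF an, of u v] that S by auto
      then show False using close[OF that(1,2)] nk by simp
    qed
    have "cyc_dist n a s = cyc_dist n a t"
      using e close[OF a s] close[OF a t] no_jump[OF s t] no_jump[OF t s] nk unfolding h_def
      by (auto split: if_splits)
    then show "s = t"
      using cyc_add_cyc_dist[OF an] s t S by (metis lessThan_iff subsetD)
  qed
  show "h ` S \<subseteq> {..<k}"
    using close[OF a] S an cyc_dist_less unfolding h_def by fastforce
  show "s = cyc_add n a (h s) \<or> s = cyc_add n a (h s + n - k)" if "s \<in> S" for s
    using close[OF a that] S that an nk cyc_add_cyc_dist[OF an, of s] unfolding h_def by auto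
qed

lemma katona_circle_card_le:
  assumes "S \<subseteq> {..<n}" "2 * k \<le> n"
    and "\<And>s t. s \<in> S \<Longrightarrow> t \<in> S \<Longrightarrow> cyc_interval n k s \<inter> cyc_interval n k t \<noteq> {}"
  shows "card S \<le> k"
proof (cases "S = {}")
  case False
  then obtain a where "a \<in> S" by blast
  then obtain h where "inj_on h S" "h ` S \<subseteq> {..<k}"
    using katona_circle_embedding assms by metis
  then show ?thesis using card_inj_on_le[of h S "{..<k}"] by simp
qed simp

lemma katona_circle_pairing:
  assumes S: "S \<subseteq> {..<n}" and nk: "2 * k \<le> n"
    and meet: "\<And>s t. s \<in> S \<Longrightarrow> t \<in> S \<Longrightarrow> cyc_interval n k s \<inter> cyc_interval n k t \<noteq> {}"
    and card: "card S = k" and a: "a \<in> S" and i: "i < k"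
  shows "cyc_add n a i \<in> S \<or> cyc_add n a (i + n - k) \<in> S"
proof -
  obtain h where h: "inj_on h S" "h ` S \<subseteq> {..<k}"
    and rep: "\<And>s. s \<in> S \<Longrightarrow> s = cyc_add n a (h s) \<or> s = cyc_add n a (h s + n - k)"
    using katona_circle_embedding[OF S nk a meet] by metis
  have "h ` S = {..<k}"
    using card_subset_eq[OF _ h(2)] card_image[OF h(1)] card by simp
  then obtain s where "s \<in> S" "h s = i" using i by (metis imageE lessThan_iff)
  then show ?thesis using rep by metis
qed

section \<open>Katona's proof of the Erdos-Ko-Rado theorem\<close>

(* A permutation p of {..<n} is read as a cyclic arrangement, with p i at position i. *)
definition arc :: "nat \<Rightarrow> nat \<Rightarrow> (nat \<Rightarrow> nat) \<Rightarrow> nat \<Rightarrow> nat set" where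
  "arc n k p s = p ` cyc_interval n k s"

definition arc_starts :: "nat \<Rightarrow> nat \<Rightarrow> nat set set \<Rightarrow> (nat \<Rightarrow> nat) \<Rightarrow> nat set" where
  "arc_starts n k F p = {s. s < n \<and> arc n k p s \<in> F}"

definition arc_count :: "nat \<Rightarrow> nat \<Rightarrow> nat set \<Rightarrow> nat" where
  "arc_count n k A = (\<Sum>p | p permutes {..<n}. card {s. s < n \<and> arc n k p s = A})"

lemma finite_kneser_vertices: "finite (kneser_vertices n k)"
  unfolding kneser_vertices_def by (rule finite_subset[of _ "Pow {..<n}"]) auto

lemma card_kneser_vertices: "card (kneser_vertices n k) = n choose k"
  unfolding kneser_vertices_def using n_subsets[of "{..<n}" k] by simp

lemma arc_in_kneser_vertices:
  assumes "p permutes {..<n}" "s < n" "k \<le> n"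
  shows "arc n k p s \<in> kneser_vertices n k"
proof -
  have "card (arc n k p s) = k"
    using permutes_inj[OF assms(1)] card_cyc_interval[OF assms(2,3)]
    by (simp add: arc_def card_image inj_on_subset)
  moreover have "arc n k p s \<subseteq> {..<n}"
    using cyc_interval_subset[OF assms(2,3)] permutes_in_image[OF assms(1)] by (auto simp: arc_def)
  ultimately show ?thesis by (simp add: kneser_vertices_def)
qed

lemma arc_Int:
  "inj p \<Longrightarrow> arc n k p s \<inter> arc n k p t = p ` (cyc_interval n k s \<inter> cyc_interval n k t)"
  by (simp add: arc_def image_Int)

lemma arc_starts_meet:
  assumes p: "p permutes {..<n}" and F: "intersecting F"
    and s: "s \<in> arc_starts n k F p" and t: "t \<in> arc_starts n k F p"
  shows "cyc_interval n k s \<inter> cyc_interval n k t \<noteq> {}"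
proof
  assume "cyc_interval n k s \<inter> cyc_interval n k t = {}"
  then have "arc n k p s \<inter> arc n k p t = {}"
    using arc_Int[OF permutes_inj[OF p]] by simp
  moreover have "arc n k p s \<in> F" "arc n k p t \<in> F" using s t by (auto simp: arc_starts_def)
  ultimately show False using F by (auto simp: intersecting_def)
qed

lemma card_arc_starts_le:
  assumes "p permutes {..<n}" "intersecting F" "2 * k \<le> n"
  shows "card (arc_starts n k F p) \<le> k"
proof (rule katona_circle_card_le)
  show "arc_starts n k F p \<subseteq> {..<n}" by (auto simp: arc_starts_def)
qed (use arc_starts_meet[OF assms(1,2)] assms(3) in auto)

lemma arc_starts_pairing:
  assumes "p permutes {..<n}" "intersecting F" "2 * k \<le> n"
    and "card (arc_starts n k F p) = k" "a \<in> arc_starts n k F p" "i < k"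
  shows "cyc_add n a i \<in> arc_starts n k F p \<or> cyc_add n a (i + n - k) \<in> arc_starts n k F p"
proof (rule katona_circle_pairing)
  show "arc_starts n k F p \<subseteq> {..<n}" by (auto simp: arc_starts_def)
qed (use arc_starts_meet[OF assms(1,2)] assms(3-) in auto)

lemma arc_count_eq:
  assumes "A \<subseteq> {..<n}" "B \<subseteq> {..<n}" "card A = card B"
  shows "arc_count n k A = arc_count n k B"
proof -
  obtain t where t: "t permutes {..<n}" "t ` A = B"
    using obtain_permutes_image_eq[of "{..<n}" A B] assms by auto
  have arc_comp: "arc n k (t \<circ> p) s = B \<longleftrightarrow> arc n k p s = A" for p s
    unfolding arc_def image_comp[symmetric] t(2)[symmetric]
    using inj_image_eq_iff[OF permutes_inj[OF t(1)]] .
  show ?thesis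
    unfolding arc_count_def arc_comp[symmetric]
    by (rule sum_permutations_compose_left[OF t(1), symmetric])
qed

lemma card_arc_starts_eq_sum:
  assumes "finite F"
  shows "card (arc_starts n k F p) = (\<Sum>A\<in>F. card {s. s < n \<and> arc n k p s = A})"
proof -
  have "arc_starts n k F p = (\<Union>A\<in>F. {s. s < n \<and> arc n k p s = A})"
    by (auto simp: arc_starts_def)
  then show ?thesis using assms by (auto intro: card_UN_disjoint)
qed

lemma sum_card_arc_starts:
  assumes F: "F \<subseteq> kneser_vertices n k" and k: "1 \<le> k" "k \<le> n"
  shows "((n - 1) choose (k - 1)) * (\<Sum>p | p permutes {..<n}. card (arc_starts n k F p))
    = k * fact n * card F"
proof -
  let ?K = "kneser_vertices n k"
  (* By symmetry every k-set is the arc of the same number N of pairs (p, s);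
     taking for F all k-sets determines N. *)
  define N where "N = arc_count n k {..<k}"
  have count: "arc_count n k A = N" if "A \<in> ?K" for A
    unfolding N_def using that k by (intro arc_count_eq) (auto simp: kneser_vertices_def)
  have double_count: "(\<Sum>p | p permutes {..<n}. card (arc_starts n k G p)) = card G * N"
    if G: "G \<subseteq> ?K" for G
  proof -
    have fin: "finite G" using G finite_kneser_vertices finite_subset by blast
    have "(\<Sum>p | p permutes {..<n}. card (arc_starts n k G p))
        = (\<Sum>p | p permutes {..<n}. \<Sum>A\<in>G. card {s. s < n \<and> arc n k p s = A})"
      using card_arc_starts_eq_sum[OF fin] by simp
    also have "\<dots> = (\<Sum>A\<in>G. arc_count n k A)"
      unfolding arc_count_def by (rule sum.swap)
    also have "\<dots> = (\<Sum>A\<in>G. N)"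
      using count G by (intro sum.cong) auto
    finally show ?thesis by simp
  qed
  have "arc_starts n k ?K p = {..<n}" if "p permutes {..<n}" for p
    using arc_in_kneser_vertices[OF that _ k(2)] by (auto simp: arc_starts_def)
  then have "(\<Sum>p | p permutes {..<n}. card (arc_starts n k ?K p)) = fact n * n"
    using card_permutations[of "{..<n}" n] by simp
  then have count_K: "fact n * n = card ?K * N"
    using double_count[of ?K] by simp
  have card_K: "k * card ?K = n * ((n - 1) choose (k - 1))"
    using times_binomial_minus1_eq[of k n] k by (simp add: card_kneser_vertices)
  have "n * (((n - 1) choose (k - 1)) * (card F * N)) = (k * card ?K) * (card F * N)"
    by (simp only: card_K mult.assoc)
  also have "\<dots> = k * card F * (card ?K * N)"
    by (simp only: ac_simps)
  also have "\<dots> = n * (k * fact n * card F)"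
    by (subst count_K[symmetric]) (simp only: ac_simps)
  finally show ?thesis using double_count[OF F] k by simp
qed

theorem erdos_ko_rado:
  assumes k: "1 \<le> k" "2 * k \<le> n" and F: "F \<subseteq> kneser_vertices n k" "intersecting F"
  shows "card F \<le> (n - 1) choose (k - 1)"
proof -
  have kn: "k \<le> n" using k by simp
  have "(\<Sum>p | p permutes {..<n}. card (arc_starts n k F p)) \<le> (\<Sum>p | p permutes {..<n}. k)"
    using card_arc_starts_le[OF _ F(2) k(2)] by (intro sum_mono) blast
  also have "\<dots> = k * fact n"
    using card_permutations[of "{..<n}" n] by simp
  finally have "((n - 1) choose (k - 1)) * (\<Sum>p | p permutes {..<n}. card (arc_starts n k F p))
      \<le> ((n - 1) choose (k - 1)) * (k * fact n)"
    by (rule mult_le_mono2)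
  also have "\<dots> = (k * fact n) * ((n - 1) choose (k - 1))"
    by (rule mult.commute)
  finally have "(k * fact n) * card F \<le> (k * fact n) * ((n - 1) choose (k - 1))"
    by (simp only: sum_card_arc_starts[OF F(1) k(1) kn])
  then show ?thesis using k by simp
qed

lemma erdos_ko_rado_extremal_arc_starts:
  assumes k: "1 \<le> k" "2 * k \<le> n" and F: "F \<subseteq> kneser_vertices n k" "intersecting F"
    and card_F: "card F = (n - 1) choose (k - 1)" and p: "p permutes {..<n}"
  shows "card (arc_starts n k F p) = k"
proof -
  let ?P = "{p. p permutes {..<n}}"
  have kn: "k \<le> n" using k by simp
  have "((n - 1) choose (k - 1)) * (\<Sum>q\<in>?P. card (arc_starts n k F q))
      = ((n - 1) choose (k - 1)) * (\<Sum>q\<in>?P. k)"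
    using sum_card_arc_starts[OF F(1) k(1) kn] card_permutations[of "{..<n}" n]
    unfolding card_F by (simp add: ac_simps)
  moreover have "0 < (n - 1) choose (k - 1)" using k by simp
  ultimately have "(\<Sum>q\<in>?P. card (arc_starts n k F q)) = (\<Sum>q\<in>?P. k)" by simp
  then show ?thesis
  proof (rule sum_mono_inv)
    show "card (arc_starts n k F q) \<le> k" if "q \<in> ?P" for q
      using card_arc_starts_le[OF _ F(2) k(2)] that by simp
  qed (use p finite_permutations[of "{..<n}"] in simp_all)
qed

section \<open>Extremal intersecting families are stars\<close>

definition kneser_star :: "nat \<Rightarrow> nat \<Rightarrow> nat \<Rightarrow> nat set set" where
  "kneser_star n k x = {A \<in> kneser_vertices n k. x \<in> A}"

lemma card_kneser_star:
  "x < n \<Longrightarrow> 1 \<le> k \<Longrightarrow> card (kneser_star n k x) = (n - 1) choose (k - 1)"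
  using card_subsets_containing[of "{..<n}" x k]
  by (simp add: kneser_star_def kneser_vertices_def)

lemma obtain_exchange_arrangement:
  assumes k: "2 \<le> k" "2 * k \<le> n"
    and X: "X \<subseteq> {..<n}" "card X = k - 1" "x \<notin> X"
    and Y: "Y \<subseteq> {..<n}" "card Y = k - 1" "z \<notin> Y"
    and xz: "x < n" "z < n" "insert x X \<inter> insert z Y = {}"
  obtains q where "q permutes {..<n}" "arc n k q 0 = insert x X"
    "arc n k q (n - k) = insert z Y" "arc n k q (n - k + 1) = insert x Y"
proof -
  have fin: "finite X" "finite Y" using X(1) Y(1) finite_subset by auto
  obtain f1 where f1: "bij_betw f1 {..<k} (insert x X)" "f1 0 = x"
    using obtain_bij_betw_point[of "{..<k}" "insert x X" 0 x] fin X k by auto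
  obtain f2 where f2: "bij_betw f2 {n-k..<n} (insert z Y)" "f2 (n - k) = z"
    using obtain_bij_betw_point[of "{n-k..<n}" "insert z Y" "n - k" z] fin Y k by auto
  have "{..<k} \<inter> {n-k..<n} = {}" using k by auto
  then have f: "bij_betw (\<lambda>i. if i \<in> {..<k} then f1 i else f2 i)
      ({..<k} \<union> {n-k..<n}) (insert x X \<union> insert z Y)"
    by (rule bij_betw_disjoint_Un[OF f1(1) f2(1) _ xz(3)])
  have "{..<k} \<union> {n-k..<n} \<subseteq> {..<n}" "insert x X \<union> insert z Y \<subseteq> {..<n}"
    using X Y xz k by auto
  then obtain q where q: "q permutes {..<n}"
    and q_eq: "\<And>i. i \<in> {..<k} \<union> {n-k..<n} \<Longrightarrow> q i = (if i \<in> {..<k} then f1 i else f2 i)"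
    using obtain_permutes_extending[OF finite_lessThan _ _ f] by blast
  have "q ` {..<k} = f1 ` {..<k}" using q_eq by (intro image_cong) auto
  then have qX: "q ` {..<k} = insert x X" using f1(1) by (simp add: bij_betw_def)
  have qx: "q 0 = x" using q_eq[of 0] f1(2) k by simp
  have "q ` {n-k..<n} = f2 ` {n-k..<n}" using q_eq k by (intro image_cong) auto
  then have qzY: "q ` {n-k..<n} = insert z Y" using f2(1) by (simp add: bij_betw_def)
  have "\<not> n - k < k" "n - k < n" using k by simp_all
  then have qz: "q (n - k) = z" using q_eq[of "n - k"] f2(2) by simp
  have "{n-k..<n} = insert (n - k) {n-k+1..<n}" using k by auto
  then have "insert z (q ` {n-k+1..<n}) = insert z Y"
    unfolding qzY[symmetric] by (simp only: image_insert qz)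
  moreover have "z \<notin> q ` {n-k+1..<n}" using qz inj_eq[OF permutes_inj[OF q]] by auto
  ultimately have qY: "q ` {n-k+1..<n} = Y" using Y(3) by (simp add: insert_ident)
  show ?thesis
  proof
    show "arc n k q 0 = insert x X"
      using cyc_interval_no_wrap[of 0 k n] k qX by (simp add: arc_def atLeast0LessThan)
    show "arc n k q (n - k) = insert z Y"
      using cyc_interval_no_wrap[of "n - k" k n] k qzY by (simp add: arc_def)
    show "arc n k q (n - k + 1) = insert x Y"
      using cyc_interval_wrap[of "n - k + 1" n k] k qY qx by (simp add: arc_def lessThan_Suc)
  qed (rule q)
qed

locale extremal_intersecting_family =
  fixes n k :: nat and F :: "nat set set"
  assumes two_le_k: "2 \<le> k" and n_gt: "2 * k < n"
    and F_sub: "F \<subseteq> kneser_vertices n k" and F_intersecting: "intersecting F"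
    and card_F: "card F = (n - 1) choose (k - 1)"
begin

lemma card_arc_starts: "p permutes {..<n} \<Longrightarrow> card (arc_starts n k F p) = k"
  using erdos_ko_rado_extremal_arc_starts[OF _ _ F_sub F_intersecting card_F] two_le_k n_gt by simp

lemma extremal_arc_starts_pairing:
  assumes "p permutes {..<n}" "a \<in> arc_starts n k F p" "i < k"
  shows "cyc_add n a i \<in> arc_starts n k F p \<or> cyc_add n a (i + n - k) \<in> arc_starts n k F p"
  using arc_starts_pairing[OF assms(1) F_intersecting _ card_arc_starts[OF assms(1)] assms(2,3)]
    n_gt by simp

definition link :: "nat \<Rightarrow> nat set set" where
  "link x = {Y. x \<notin> Y \<and> insert x Y \<in> F}"

lemma link_memD:
  assumes "Y \<in> link x"
  shows "Y \<subseteq> {..<n}" "card Y = k - 1" "finite Y" "x < n"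
proof -
  have Y: "x \<notin> Y" "insert x Y \<subseteq> {..<n}" "card (insert x Y) = k"
    using assms F_sub by (auto simp: link_def kneser_vertices_def)
  then show "Y \<subseteq> {..<n}" "finite Y" "x < n" using finite_subset by auto
  then show "card Y = k - 1" using Y by simp
qed

lemma link_exchange:
  assumes Y: "Y \<in> link x" and M: "M \<in> F" "M \<inter> Y = {}"
    and z: "z < n" "z \<notin> insert x Y" "z \<notin> M"
    and X: "X \<subseteq> {..<n}" "card X = k - 1" "x \<notin> X" "z \<notin> X" "X \<inter> Y = {}"
  shows "X \<in> link x"
proof -
  have Ys: "Y \<subseteq> {..<n}" "card Y = k - 1" "x < n" "x \<notin> Y" "insert x Y \<in> F"
    using link_memD[OF Y] Y by (auto simp: link_def)
  obtain q where q: "q permutes {..<n}" "arc n k q 0 = insert x X"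
    "arc n k q (n - k) = insert z Y" "arc n k q (n - k + 1) = insert x Y"
    using obtain_exchange_arrangement[OF two_le_k less_imp_le[OF n_gt] X(1-3) Ys(1,2) _ Ys(3) z(1)]
      z(2) X(4,5) Ys(4) by blast
  (* The arc x \<union> Y at n - k + 1 lies in F, the arc z \<union> Y at n - k misses M and does not,
     so the pairing of the extremal arcs forces the arc x \<union> X at 0 into F. *)
  have "n - k + 1 \<in> arc_starts n k F q"
    using q(4) Ys(5) two_le_k n_gt by (simp add: arc_starts_def)
  moreover have "n - k \<notin> arc_starts n k F q"
  proof
    assume "n - k \<in> arc_starts n k F q"
    then have "insert z Y \<in> F" using q(3) by (simp add: arc_starts_def)
    moreover have "M \<inter> insert z Y = {}" using M z by auto
    ultimately show False using M(1) F_intersecting unfolding intersecting_def by blast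
  qed
  moreover have "cyc_add n (n - k + 1) (k - 1) = 0" "cyc_add n (n - k + 1) (k - 1 + n - k) = n - k"
    using two_le_k n_gt by (auto simp: cyc_add_def)
  ultimately have "0 \<in> arc_starts n k F q"
    using extremal_arc_starts_pairing[OF q(1), of "n - k + 1" "k - 1"] two_le_k by auto
  then show ?thesis using q(2) X by (simp add: arc_starts_def link_def)
qed

lemma link_disjoint_closed:
  assumes Y: "Y \<in> link x" and W: "W \<in> link x" "W \<inter> Y = {}"
    and X: "X \<subseteq> {..<n}" "card X = k - 1" "x \<notin> X" "X \<inter> Y = {}"
  shows "X \<in> link x"
proof -
  have Ys: "Y \<subseteq> {..<n}" "card Y = k - 1" "finite Y" "x < n" "x \<notin> Y"
    using link_memD[OF Y] Y by (auto simp: link_def)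
  have Ws: "W \<subseteq> {..<n}" "card W = k - 1" "finite W" "x \<notin> W" "insert x W \<in> F"
    using link_memD[OF W(1)] W(1) by (auto simp: link_def)
  have k: "2 \<le> k" "2 * k < n" using two_le_k n_gt .
  (* Two exchanges: from W via a point z1 to an auxiliary W' avoiding z, then from W' via z to X. *)
  define U where "U = {..<n} - insert x Y"
  have "card U = n - k"
    using Ys k card_Diff_subset[of "insert x Y" "{..<n}"] by (simp add: U_def)
  have ex_avoid: "\<exists>u\<in>U. u \<notin> A" if "finite A" "card A < n - k" for A
    using card_mono[OF that(1), of U] that \<open>card U = n - k\<close> by auto
  have "card X < n - k" using X k by simp
  then obtain z where z: "z \<in> U" "z \<notin> X"
    using ex_avoid[of X] finite_subset[OF X(1)] by blast
  have "card (insert z W) < n - k" using Ws k by (auto simp: card_insert_if)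
  then obtain z1 where z1: "z1 \<in> U" "z1 \<notin> insert z W"
    using ex_avoid[of "insert z W"] Ws by blast
  have "k - 1 \<le> card (U - {z, z1})"
    using \<open>card U = n - k\<close> z z1 k card_Diff_subset[of "{z, z1}" U] by (simp add: U_def)
  then obtain W' where W': "W' \<subseteq> U - {z, z1}" "card W' = k - 1"
    by (rule obtain_subset_with_card_n)
  have W's: "W' \<subseteq> {..<n}" "x \<notin> W'" "z \<notin> W'" "z1 \<notin> W'" "W' \<inter> Y = {}"
    using W'(1) by (auto simp: U_def)
  have "W' \<in> link x"
    by (rule link_exchange[OF Y Ws(5) _ _ _ _ W's(1) W'(2) W's(2,4,5)])
      (use W(2) Ws(4) Ys(5) z1 in \<open>auto simp: U_def\<close>)
  then show ?thesis
    by (intro link_exchange[OF Y _ _ _ _ _ X(1,2,3) _ X(4), of "insert x W'" z])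
      (use z W's Ys(5) in \<open>auto simp: U_def link_def\<close>)
qed

lemma mem_link_if_disjoint_pair:
  assumes Y: "Y \<in> link x" and W: "W \<in> link x" "W \<inter> Y = {}"
    and T: "T \<subseteq> {..<n}" "card T = k - 1" "x \<notin> T"
  shows "T \<in> link x"
proof -
  let ?U = "{..<n} - {x}"
  have x: "x < n" using link_memD[OF Y] by simp
  have "T \<in> link x \<and> (\<exists>W\<in>link x. W \<inter> T = {})"
  proof (rule kneser_connected_induct[where U = ?U and j = "k - 1" and T = T
        and P = "\<lambda>X. X \<in> link x \<and> (\<exists>W\<in>link x. W \<inter> X = {})"])
    have "card ?U = n - 1" using x by simp
    then show "2 * (k - 1) < card ?U" using n_gt two_le_k by arith
    show "Y \<in> link x \<and> (\<exists>W\<in>link x. W \<inter> Y = {})" using Y W by blast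
    show "Y \<subseteq> ?U" "card Y = k - 1" using link_memD[OF Y] Y by (auto simp: link_def)
    show "T \<subseteq> ?U" using T by blast
    fix Y' X
    assume Y': "Y' \<in> link x \<and> (\<exists>W\<in>link x. W \<inter> Y' = {})"
      and X: "X \<subseteq> ?U" "card X = k - 1" "X \<inter> Y' = {}"
    obtain W' where "W' \<in> link x" "W' \<inter> Y' = {}" using Y' by blast
    then have "X \<in> link x"
      using link_disjoint_closed[of Y' x W' X] Y' X by blast
    moreover have "Y' \<inter> X = {}" using X(3) by blast
    ultimately show "X \<in> link x \<and> (\<exists>W\<in>link x. W \<inter> X = {})"
      using Y' by blast
  qed (use T in simp_all)
  then show ?thesis ..
qed

lemma ex_members_meeting_in_one_point: "\<exists>A\<in>F. \<exists>B\<in>F. \<exists>m. A \<inter> B = {m}"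
proof -
  (* Put a member A at positions 0..k-1 and let t be the largest start below k.  If t = k - 1,
     the arcs at 0 and t meet in {t}; otherwise t + 1 is no start, so its partner t + 1 - k (mod n)
     is one, and its arc meets the arc at t in {t}. *)
  have k: "2 \<le> k" "2 * k < n" using two_le_k n_gt .
  have "F \<noteq> {}" using card_F k by auto
  then obtain A where A: "A \<in> F" by blast
  then have "A \<subseteq> {..<n}" "card A = k" using F_sub by (auto simp: kneser_vertices_def)
  then obtain q where q: "q permutes {..<n}" "q ` {..<k} = A"
    using obtain_permutes_image_eq[of "{..<n}" "{..<k}" A] k by auto
  have single_meet: "\<exists>A\<in>F. \<exists>B\<in>F. \<exists>m. A \<inter> B = {m}"
    if "s1 \<in> arc_starts n k F q" "s2 \<in> arc_starts n k F q"
      "cyc_interval n k s1 \<inter> cyc_interval n k s2 = {m}" for s1 s2 m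
  proof -
    have "arc n k q s1 \<inter> arc n k q s2 = {q m}"
      using arc_Int[OF permutes_inj[OF q(1)]] that(3) by simp
    then show ?thesis using that(1,2) by (auto simp: arc_starts_def)
  qed
  have I0: "cyc_interval n k 0 = {..<k}"
    using cyc_interval_no_wrap[of 0 k n] k by (simp add: atLeast0LessThan)
  then have start0: "0 \<in> arc_starts n k F q" using q A k by (simp add: arc_starts_def arc_def)
  define t where "t = Max (arc_starts n k F q \<inter> {..<k})"
  have "0 \<in> arc_starts n k F q \<inter> {..<k}" using start0 k by simp
  then have "t \<in> arc_starts n k F q \<inter> {..<k}" unfolding t_def by (intro Max_in) auto
  moreover have "s \<le> t" if "s \<in> arc_starts n k F q" "s < k" for s
    unfolding t_def using that by (intro Max_ge) auto
  ultimately have t: "t \<in> arc_starts n k F q" "t < k"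
    "\<And>s. s \<in> arc_starts n k F q \<Longrightarrow> s < k \<Longrightarrow> s \<le> t"
    by auto
  have It: "cyc_interval n k t = {t..<t+k}" using cyc_interval_no_wrap[of t k n] t(2) k by simp
  show ?thesis
  proof (cases "t = k - 1")
    case True
    then have "cyc_interval n k 0 \<inter> cyc_interval n k t = {k - 1}" using I0 It k by auto
    then show ?thesis using single_meet[OF start0 t(1)] by blast
  next
    case False
    then have "t + 1 \<notin> arc_starts n k F q" using t(2,3) by fastforce
    moreover have "cyc_add n 0 (t + 1) = t + 1" "cyc_add n 0 (t + 1 + n - k) = t + 1 + n - k"
      using False t(2) k by (auto simp: cyc_add_def)
    ultimately have s: "t + 1 + n - k \<in> arc_starts n k F q"
      using extremal_arc_starts_pairing[OF q(1) start0, of "t + 1"] False t(2) by auto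
    have "cyc_interval n k (t + 1 + n - k) = {t+1+n-k..<n} \<union> {..<t+1}"
      using cyc_interval_wrap[of "t + 1 + n - k" n k] False t(2) k by simp
    then have "cyc_interval n k t \<inter> cyc_interval n k (t + 1 + n - k) = {t}"
      using It False t(2) k by auto
    then show ?thesis using single_meet[OF t(1) s] by blast
  qed
qed

lemma ex_eq_kneser_star: "\<exists>x<n. F = kneser_star n k x"
proof -
  obtain A B m where AB: "A \<in> F" "B \<in> F" "A \<inter> B = {m}"
    using ex_members_meeting_in_one_point by blast
  have "m \<in> A" "m \<in> B" using AB(3) by auto
  then have link_m: "A - {m} \<in> link m" "B - {m} \<in> link m"
    using AB(1,2) by (simp_all add: link_def insert_absorb)
  have m: "m < n" using link_memD[OF link_m(1)] by simp
  have "kneser_star n k m \<subseteq> F"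
  proof
    fix C assume C: "C \<in> kneser_star n k m"
    then have "C - {m} \<subseteq> {..<n}" "card (C - {m}) = k - 1" "m \<notin> C - {m}"
      by (auto simp: kneser_star_def kneser_vertices_def)
    then have "C - {m} \<in> link m"
      using mem_link_if_disjoint_pair[OF link_m] AB(3) by blast
    then show "C \<in> F" using C by (auto simp: link_def kneser_star_def insert_absorb)
  qed
  moreover have "card (kneser_star n k m) = card F"
    using card_kneser_star[OF m] two_le_k card_F by simp
  moreover have "finite F" using F_sub finite_kneser_vertices finite_subset by blast
  ultimately show ?thesis using m card_subset_eq by blast
qed

end

section \<open>Odd independent sets in Kneser graphs\<close>

lemma finite_indep_sets: "finite V \<Longrightarrow> finite {S. indep_set V E S}"
  by (rule finite_subset[of _ "Pow V"]) (auto simp: indep_set_def)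

lemma odd_indep_set_empty: "odd_indep_set V E {}"
  by (simp add: odd_indep_set_def indep_set_def)

lemma alpha_eqI:
  assumes "finite V" "indep_set V E S" "card S = m" "\<And>T. indep_set V E T \<Longrightarrow> card T \<le> m"
  shows "alpha V E = m"
  unfolding alpha_def using assms finite_indep_sets[OF assms(1)]
  by (intro Max_eqI) auto

lemma alpha_od_eq_alpha_iff:
  assumes V: "finite V"
  shows "alpha_od V E = alpha V E \<longleftrightarrow> (\<exists>S. odd_indep_set V E S \<and> card S = alpha V E)"
proof -
  have odd_sub: "{S. odd_indep_set V E S} \<subseteq> {S. indep_set V E S}"
    by (auto simp: odd_indep_set_def)
  have fin_odd: "finite (card ` {S. odd_indep_set V E S})"
    using finite_subset[OF odd_sub finite_indep_sets[OF V]] by simp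
  have fin: "finite (card ` {S. indep_set V E S})"
    using finite_indep_sets[OF V] by simp
  have ne_odd: "card ` {S. odd_indep_set V E S} \<noteq> {}"
    using odd_indep_set_empty by blast
  have le: "alpha_od V E \<le> alpha V E"
    unfolding alpha_od_def alpha_def using odd_sub fin ne_odd by (intro Max_mono) auto
  show ?thesis
  proof
    assume "alpha_od V E = alpha V E"
    then show "\<exists>S. odd_indep_set V E S \<and> card S = alpha V E"
      using Max_in[OF fin_odd ne_odd] unfolding alpha_od_def by force
  next
    assume "\<exists>S. odd_indep_set V E S \<and> card S = alpha V E"
    then have "alpha V E \<in> card ` {S. odd_indep_set V E S}" by force
    then have "alpha V E \<le> alpha_od V E"
      unfolding alpha_od_def using fin_odd by (rule Max_ge[rotated])
    then show "alpha_od V E = alpha V E" using le by simp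
  qed
qed

lemma indep_set_kneser_iff:
  "indep_set (kneser_vertices n k) kneser_adj S \<longleftrightarrow> S \<subseteq> kneser_vertices n k \<and> intersecting S"
  unfolding indep_set_def intersecting_def kneser_adj_def by blast

lemma indep_set_kneser_star: "indep_set (kneser_vertices n k) kneser_adj (kneser_star n k x)"
  unfolding indep_set_kneser_iff intersecting_def kneser_star_def by blast

lemma alpha_kneser:
  assumes "1 \<le> k" "2 * k \<le> n"
  shows "alpha (kneser_vertices n k) kneser_adj = (n - 1) choose (k - 1)"
proof (rule alpha_eqI[OF finite_kneser_vertices indep_set_kneser_star])
  show "card (kneser_star n k 0) = (n - 1) choose (k - 1)"
    using card_kneser_star[of 0 n k] assms by simp
  show "card T \<le> (n - 1) choose (k - 1)" if "indep_set (kneser_vertices n k) kneser_adj T" for T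
    using erdos_ko_rado[OF assms] that by (simp add: indep_set_kneser_iff)
qed

lemma card_kneser_star_neighbours:
  assumes x: "x < n" and v: "v \<in> kneser_vertices n k" "x \<notin> v" and k: "1 \<le> k"
  shows "card {u \<in> kneser_star n k x. kneser_adj v u} = (n - k - 1) choose (k - 1)"
proof -
  have "{u \<in> kneser_star n k x. kneser_adj v u} = {A. A \<subseteq> {..<n} - v \<and> card A = k \<and> x \<in> A}"
    by (auto simp: kneser_star_def kneser_vertices_def kneser_adj_def)
  moreover have "card ({..<n} - v) = n - k"
    using v card_Diff_subset[of v "{..<n}"] finite_subset[of v "{..<n}"]
    by (simp add: kneser_vertices_def)
  ultimately show ?thesis
    using card_subsets_containing[of "{..<n} - v" x k] x v k by simp
qed

lemma odd_indep_set_kneser_star_iff: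
  assumes k: "1 \<le> k" "2 * k \<le> n" and x: "x < n"
  shows "odd_indep_set (kneser_vertices n k) kneser_adj (kneser_star n k x)
    \<longleftrightarrow> odd ((n - k - 1) choose (k - 1))"
proof -
  have nbrs: "card {u \<in> kneser_star n k x. kneser_adj v u} = (n - k - 1) choose (k - 1)"
    if "v \<in> kneser_vertices n k - kneser_star n k x" for v
    using card_kneser_star_neighbours[OF x _ _ k(1)] that by (auto simp: kneser_star_def)
  have "k \<le> card ({..<n} - {x})" using k x by simp
  then obtain v where v: "v \<subseteq> {..<n} - {x}" "card v = k"
    by (rule obtain_subset_with_card_n)
  then have "v \<in> kneser_vertices n k - kneser_star n k x"
    by (auto simp: kneser_vertices_def kneser_star_def)
  moreover have "0 < (n - k - 1) choose (k - 1)" using k by simp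
  ultimately show ?thesis
    using nbrs indep_set_kneser_star by (auto simp: odd_indep_set_def)
qed

lemma alpha_od_kneser_eq_alpha_iff:
  assumes k: "2 \<le> k" "2 * k \<le> n"
  shows "alpha_od (kneser_vertices n k) kneser_adj = alpha (kneser_vertices n k) kneser_adj
    \<longleftrightarrow> odd ((n - k - 1) choose (k - 1))"
proof
  assume "alpha_od (kneser_vertices n k) kneser_adj = alpha (kneser_vertices n k) kneser_adj"
  moreover have "alpha (kneser_vertices n k) kneser_adj = (n - 1) choose (k - 1)"
    using alpha_kneser k by simp
  ultimately obtain S where S: "odd_indep_set (kneser_vertices n k) kneser_adj S"
    "card S = (n - 1) choose (k - 1)"
    using alpha_od_eq_alpha_iff[OF finite_kneser_vertices] by metis
  show "odd ((n - k - 1) choose (k - 1))"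
  proof (cases "n = 2 * k")
    case True
    then show ?thesis by simp
  next
    case False
    then interpret extremal_intersecting_family n k S
      using S k by unfold_locales (auto simp: odd_indep_set_def indep_set_kneser_iff)
    obtain x where "x < n" "S = kneser_star n k x" using ex_eq_kneser_star by blast
    then show ?thesis using S(1) odd_indep_set_kneser_star_iff k by simp
  qed
next
  assume "odd ((n - k - 1) choose (k - 1))"
  then have "odd_indep_set (kneser_vertices n k) kneser_adj (kneser_star n k 0)"
    using odd_indep_set_kneser_star_iff[of k n 0] k by simp
  moreover have "card (kneser_star n k 0) = alpha (kneser_vertices n k) kneser_adj"
    using card_kneser_star[of 0 n k] alpha_kneser[of k n] k by simp
  ultimately show
    "alpha_od (kneser_vertices n k) kneser_adj = alpha (kneser_vertices n k) kneser_adj"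
    using alpha_od_eq_alpha_iff[OF finite_kneser_vertices] by blast
qed

lemma choose_vandermonde_split:
  assumes "1 \<le> k" "k < n"
  shows "(n - 1) choose (k - 1) = ((n - k - 1) choose (k - 1)) +
     (\<Sum>t=1..k. (k choose t) * (if t \<le> k - 1 then (n - k - 1) choose (k - 1 - t) else 0))"
proof -
  define h where "h t = (k choose t) * ((n - k - 1) choose (k - 1 - t))" for t
  have "(n - 1) choose (k - 1) = (\<Sum>t\<le>k-1. h t)"
    using vandermonde[of k "n - k - 1" "k - 1"] assms unfolding h_def by simp
  also have "\<dots> = h 0 + (\<Sum>t=1..k-1. h t)"
    by (simp add: atMost_atLeast0 sum.atLeast_Suc_atMost)
  also have "(\<Sum>t=1..k-1. h t)
      = (\<Sum>t=1..k. (k choose t) * (if t \<le> k - 1 then (n - k - 1) choose (k - 1 - t) else 0))"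
  proof -
    have "{1..k} = insert k {1..k-1}" using assms by auto
    then show ?thesis using assms by (simp add: h_def)
  qed
  finally show ?thesis by (simp add: h_def)
qed

theorem theorem2:
  fixes n k :: nat
  assumes "k \<ge> 2" and "n \<ge> 2 * k"
  shows "(alpha_od (kneser_vertices n k) kneser_adj = alpha (kneser_vertices n k) kneser_adj
            \<longleftrightarrow> odd ((n - k - 1) choose (k - 1)))
       \<and> (alpha_od (kneser_vertices n k) kneser_adj = alpha (kneser_vertices n k) kneser_adj
            \<longleftrightarrow> ((n - 1) choose (k - 1)) mod 2 \<noteq>
                 (\<Sum>t=1..k. (k choose t) * (if t \<le> k - 1 then (n - k - 1) choose (k - 1 - t) else 0)) mod 2)"
proof -
  have k: "1 \<le> k" "k < n" using assms by auto
  have parity: "odd a \<longleftrightarrow> (a + b) mod 2 \<noteq> b mod 2" for a b :: nat by presburger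
  show ?thesis
    unfolding alpha_od_kneser_eq_alpha_iff[OF assms] choose_vandermonde_split[OF k]
    by (intro conjI refl parity)
qed

end
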